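(* Let $k\geq 1$ be an integer and let $m,n$ be integers with $m\geq n\geq 0$. Then \[C_{k,m}C_{k,n+1}-C_{k,n}C_{k,m+1}=-8(k-1)^{n+1}\,B_{k,m-n}.\]
   Context: For an integer $k\geq 1$, the generalized balancing numbers are defined by $B_{k,0}=0$, $B_{k,1}=1$ and $B_{k,n}=3kB_{k,n-1}+(1-k)B_{k,n-2}$ for $n\geq 2$; the generalized balancing-Lucas numbers are defined by $C_{k,0}=1$, $C_{k,1}=3$ and $C_{k,n}=3kC_{k,n-1}+(1-k)C_{k,n-2}$ for $n\geq 2$. *)

theory Defs
  imports Main
begin

fun genB :: "int \<Rightarrow> nat \<Rightarrow> int" where
  "genB k 0 = 0"
| "genB k (Suc 0) = 1"
| "genB k (Suc (Suc n)) = 3 * k * genB k (Suc n) + (1 - k) * genB k n"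

fun genC :: "int \<Rightarrow> nat \<Rightarrow> int" where
  "genC k 0 = 1"
| "genC k (Suc 0) = 3"
| "genC k (Suc (Suc n)) = 3 * k * genC k (Suc n) + (1 - k) * genC k n"

end

theory Submission
  imports Defs
begin

text \<open>Write \<open>C j\<close> for \<open>C\<^sub>k\<^sub>,\<^sub>j\<close> and put \<open>d = m - n\<close>. The left-hand side is the Casoratian of
  the two solutions \<open>j \<mapsto> C (j + d)\<close> and \<open>j \<mapsto> C j\<close> of the recurrence, taken at \<open>j = n\<close>.
  Each step multiplies such a Casoratian by \<open>-(1 - k) = k - 1\<close>, so it equals \<open>(k - 1)\<^sup>n\<close> times
  its value \<open>3 C d - C (d + 1)\<close> at \<open>j = 0\<close>; and \<open>3 C d - C (d + 1) = -8 (k - 1) B\<^sub>k\<^sub>,\<^sub>d\<close>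
  because both sides solve the recurrence in \<open>d\<close>.\<close>

lemma casoratian_linear_recurrence:
  fixes x y :: "nat \<Rightarrow> 'a::comm_ring_1"
  assumes x_rec: "\<And>j. x (Suc (Suc j)) = a * x (Suc j) + b * x j"
    and y_rec: "\<And>j. y (Suc (Suc j)) = a * y (Suc j) + b * y j"
  shows "x n * y (Suc n) - y n * x (Suc n) = (- b) ^ n * (x 0 * y 1 - y 0 * x 1)"
proof (induction n)
  case 0
  then show ?case by simp
next
  case (Suc n)
  have "x (Suc n) * y (Suc (Suc n)) - y (Suc n) * x (Suc (Suc n))
      = - b * (x n * y (Suc n) - y n * x (Suc n))"
    unfolding x_rec y_rec by (simp add: algebra_simps)
  then show ?case
    using Suc.IH by simp
qed

lemma genC_casoratian_base:
  "3 * genC k d - genC k (Suc d) = - 8 * (k - 1) * genB k d"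
proof (induction k d rule: genC.induct)
  case (3 k n)
  have "3 * genC k (Suc (Suc n)) - genC k (Suc (Suc (Suc n)))
      = 3 * k * (3 * genC k (Suc n) - genC k (Suc (Suc n)))
        + (1 - k) * (3 * genC k n - genC k (Suc n))"
    by (simp only: genC.simps) (simp add: algebra_simps)
  also have "\<dots> = - 8 * (k - 1) * genB k (Suc (Suc n))"
    unfolding "3.IH" by (simp add: algebra_simps)
  finally show ?case .
qed (simp_all add: algebra_simps)

theorem mainTheorem6:
  fixes k :: int and m n :: nat
  assumes "k \<ge> 1" and "m \<ge> n"
  shows "genC k m * genC k (n + 1) - genC k n * genC k (m + 1)
           = - 8 * (k - 1) ^ (n + 1) * genB k (m - n)"
proof -
  obtain d where m_eq: "m = n + d"
    using \<open>m \<ge> n\<close> le_Suc_ex by blast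
  have "genC k (n + d) * genC k (Suc n) - genC k n * genC k (Suc n + d)
      = (k - 1) ^ n * (3 * genC k d - genC k (Suc d))"
    using casoratian_linear_recurrence[of "\<lambda>j. genC k (j + d)" "3 * k" "1 - k" "genC k" n]
    by (simp add: mult.commute)
  also have "\<dots> = (k - 1) ^ n * (- 8 * (k - 1) * genB k d)"
    unfolding genC_casoratian_base ..
  also have "\<dots> = - 8 * (k - 1) ^ (n + 1) * genB k d"
    by (simp only: power_Suc2 Suc_eq_plus1[symmetric] mult_ac)
  finally show ?thesis
    unfolding m_eq by simp
qed

end
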